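(* Let $r$ be an ELP rule over atoms $\mathcal{A}$ and epistemic literals $\mathcal{E}$, and let $\Pi_r = (\mathcal{A}, \mathcal{E}, \{ r \})$. Then $r$ is tautological if and only if $\mathcal{SE}_{\Pi_r}(\Phi) = \mathcal{S}_\mathcal{A}$ for each consistent guess $\Phi \subseteq \mathcal{E}$.
   Context: A literal over a set of atoms $\mathcal{A}$ is an atom $a$ or $\neg a$. An interpretation is $I\subseteq\mathcal{A}$; $I\models a$ iff $a\in I$, $I\models\neg\ell$ iff $I\not\models\ell$. A (plain) logic program $(\mathcal{A},\mathcal{R})$ has rules $a_1\vee\cdots\vee a_l \leftarrow a_{l+1},\ldots,a_m,\neg\ell_1,\ldots,\neg\ell_n$ ($\ell_i$ literals); $H(r)$ head, $B(r)$ body, $B^+(r)=\{a_{l+1},\ldots,a_m\}$; $M\models r$ iff $M\models B(r)$ implies $M\cap H(r)\neq\emptyset$; $\mathrm{Mods}(\Pi)$ is the set of models. GL-reduct: $\Pi^I=(\mathcal{A},\{H(r)\leftarrow B^+(r)\mid r\in\mathcal{R},\ I\models\neg\ell\ \forall\neg\ell\in B(r)\})$ ($\neg\neg\neg a$ treated as $\neg a$); answer sets: models $M$ with no $M'\subset M$ a model of $\Pi^M$. An SE-model of $\Pi$ is $(X,Y)$ with $X\subseteq Y\subseteq\mathcal{A}$, $Y\models\Pi$, $X\models\Pi^Y$; $\mathrm{SE}(\Pi)$ the set of SE-models; $\mathcal{S}_\mathcal{A}$ denotes the set of all pairs $(X,Y)$ with $X\subseteq Y\subseteq\mathcal{A}$.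 An ELP is $(\mathcal{A},\mathcal{E},\mathcal{R})$ with $\mathcal{E}$ a set of epistemic literals $\mathbf{not}\,\ell$ and rules (ELP rules) $a_1\vee\cdots\vee a_k\leftarrow \ell_1,\ldots,\ell_m,\xi_1,\ldots,\xi_j,\neg\xi_{j+1},\ldots,\neg\xi_n$, $\xi_i\in\mathcal{E}$. A guess is $\Phi\subseteq\mathcal{E}$; it is consistent iff whenever $\mathcal{E}$ contains both $\mathbf{not}\,a$ and $\mathbf{not}\,\neg a$, $\Phi$ contains at least one of them. $\mathcal{I}$ is $\Phi$-compatible w.r.t. $\mathcal{E}$ iff $\mathcal{I}\neq\emptyset$, every $\mathbf{not}\,\ell\in\Phi$ has some $I\in\mathcal{I}$ with $I\not\models\ell$, and every $\mathbf{not}\,\ell\in\mathcal{E}\setminus\Phi$ has $I\models\ell$ for all $I\in\mathcal{I}$. The epistemic reduct $\Pi^\Phi=(\mathcal{A},\mathcal{R}^\Phi)$ replaces each $\mathbf{not}\,\ell\in\Phi$ by $\top$ and every other $\mathbf{not}$ by $\neg$. $\Phi$ is realizable in $\Pi$ iff some subset of $\mathrm{Mods}(\Pi^\Phi)$ is $\Phi$-compatible. SE-function: $\mathcal{SE}_\Pi(\Phi)=\mathrm{SE}(\Pi^\Phi)$ if $\Phi$ is realizable in $\Pi$, else $\emptyset$. Candidate world views are sets $AS(\Pi^\Phi)$ that are $\Phi$-compatible; world views are those with subset-maximal guess. Two ELPs $\Pi_1,\Pi_2$ are strongly equivalent iff for every ELP $\Pi$, $\Pi_1\cup\Pi$ and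 $\Pi_2\cup\Pi$ (componentwise union) have the same world views. An ELP rule $r$ is tautological iff $\Pi_r=(\mathcal{A},\mathcal{E},\{r\})$ is strongly equivalent to $(\mathcal{A},\mathcal{E},\emptyset)$. *)

theory Defs
  imports Main
begin

text \<open>Literals over atoms: an atom a (Pos a) or its negation (Neg a).
  An epistemic literal "not l" is represented by the literal l it applies to.\<close>
datatype 'a lit = Pos 'a | Neg 'a

fun lit_atom :: "'a lit \<Rightarrow> 'a" where
  "lit_atom (Pos a) = a" | "lit_atom (Neg a) = a"

text \<open>Negated body elements of plain rules: an element of this type stands for
  the body literal (neg l) where l is an atom (NAtom a: the body literal is neg a),
  a negated atom (NNeg a: the body literal is neg neg a), or top (NTop: the body
  literal is neg top, i.e. falsum).\<close>
datatype 'a nbody = NAtom 'a | NNeg 'a | NTop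

datatype 'a prule = PRule (phead: "'a set") (ppos: "'a set") (pneg: "'a nbody set")

text \<open>ELP rule: head atoms, objective body literals (atoms and negated atoms),
  epistemic literals occurring positively and epistemic literals occurring negated.\<close>
datatype 'a erule = ERule (ehead: "'a set") (eposobj: "'a set") (enegobj: "'a set")
                          (eknow: "'a lit set") (enknow: "'a lit set")

type_synonym 'a elp = "'a set \<times> 'a lit set \<times> 'a erule set"

fun lit_sat :: "'a set \<Rightarrow> 'a lit \<Rightarrow> bool" where
  "lit_sat I (Pos a) = (a \<in> I)" | "lit_sat I (Neg a) = (a \<notin> I)"

fun nbody_sat :: "'a set \<Rightarrow> 'a nbody \<Rightarrow> bool" where
  "nbody_sat I (NAtom a) = (a \<notin> I)"
| "nbody_sat I (NNeg a) = (a \<in> I)"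
| "nbody_sat I NTop = False"

definition prule_sat :: "'a set \<Rightarrow> 'a prule \<Rightarrow> bool" where
  "prule_sat M r \<longleftrightarrow>
     ((ppos r \<subseteq> M \<and> (\<forall>n\<in>pneg r. nbody_sat M n)) \<longrightarrow> phead r \<inter> M \<noteq> {})"

definition mods :: "'a set \<Rightarrow> 'a prule set \<Rightarrow> 'a set set" where
  "mods A R = {M. M \<subseteq> A \<and> (\<forall>r\<in>R. prule_sat M r)}"

definition gl_reduct :: "'a set \<Rightarrow> 'a prule set \<Rightarrow> 'a prule set" where
  "gl_reduct I R = {PRule (phead r) (ppos r) {} | r. r \<in> R \<and> (\<forall>n\<in>pneg r. nbody_sat I n)}"

definition answer_sets :: "'a set \<Rightarrow> 'a prule set \<Rightarrow> 'a set set" where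
  "answer_sets A R = {M \<in> mods A R. \<not> (\<exists>M'. M' \<subset> M \<and> M' \<in> mods A (gl_reduct M R))}"

definition se_models :: "'a set \<Rightarrow> 'a prule set \<Rightarrow> ('a set \<times> 'a set) set" where
  "se_models A R = {(X, Y). X \<subseteq> Y \<and> Y \<in> mods A R \<and> X \<in> mods A (gl_reduct Y R)}"

definition se_all :: "'a set \<Rightarrow> ('a set \<times> 'a set) set" where
  "se_all A = {(X, Y). X \<subseteq> Y \<and> Y \<subseteq> A}"

text \<open>neg l for an epistemic literal "not l" not in the guess.\<close>
fun lit_neg :: "'a lit \<Rightarrow> 'a nbody" where
  "lit_neg (Pos a) = NAtom a"
| "lit_neg (Neg a) = NNeg a"

text \<open>neg neg l, with neg neg neg a treated as neg a.\<close>
fun lit_negneg :: "'a lit \<Rightarrow> 'a nbody" where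
  "lit_negneg (Pos a) = NNeg a"
| "lit_negneg (Neg a) = NAtom a"

text \<open>Epistemic reduct of a rule: "not l" in the guess becomes top (dropped from
  the body when positive, falsum = neg top when negated); any other "not l"
  becomes neg l.\<close>
definition ereduct_rule :: "'a lit set \<Rightarrow> 'a erule \<Rightarrow> 'a prule" where
  "ereduct_rule \<Phi> r = PRule (ehead r) (eposobj r)
     (NAtom ` enegobj r \<union> lit_neg ` (eknow r - \<Phi>) \<union> lit_negneg ` (enknow r - \<Phi>)
      \<union> (if enknow r \<inter> \<Phi> \<noteq> {} then {NTop} else {}))"

definition ereduct :: "'a lit set \<Rightarrow> 'a erule set \<Rightarrow> 'a prule set" where
  "ereduct \<Phi> R = ereduct_rule \<Phi> ` R"

definition consistent_guess :: "'a lit set \<Rightarrow> 'a lit set \<Rightarrow> bool" where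
  "consistent_guess E \<Phi> \<longleftrightarrow>
     (\<forall>a. Pos a \<in> E \<and> Neg a \<in> E \<longrightarrow> Pos a \<in> \<Phi> \<or> Neg a \<in> \<Phi>)"

definition compatible :: "'a lit set \<Rightarrow> 'a lit set \<Rightarrow> 'a set set \<Rightarrow> bool" where
  "compatible E \<Phi> \<I> \<longleftrightarrow> \<I> \<noteq> {}
     \<and> (\<forall>l\<in>\<Phi>. \<exists>I\<in>\<I>. \<not> lit_sat I l)
     \<and> (\<forall>l\<in>E - \<Phi>. \<forall>I\<in>\<I>. lit_sat I l)"

definition realizable :: "'a elp \<Rightarrow> 'a lit set \<Rightarrow> bool" where
  "realizable P \<Phi> = (case P of (A, E, R) \<Rightarrow>
     (\<exists>\<I> \<subseteq> mods A (ereduct \<Phi> R). compatible E \<Phi> \<I>))"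

definition se_fun :: "'a elp \<Rightarrow> 'a lit set \<Rightarrow> ('a set \<times> 'a set) set" where
  "se_fun P \<Phi> = (case P of (A, E, R) \<Rightarrow>
     (if realizable P \<Phi> then se_models A (ereduct \<Phi> R) else {}))"

definition cand_guess :: "'a elp \<Rightarrow> 'a lit set \<Rightarrow> bool" where
  "cand_guess P \<Phi> = (case P of (A, E, R) \<Rightarrow>
     \<Phi> \<subseteq> E \<and> compatible E \<Phi> (answer_sets A (ereduct \<Phi> R)))"

definition world_views :: "'a elp \<Rightarrow> 'a set set set" where
  "world_views P = (case P of (A, E, R) \<Rightarrow>
     {answer_sets A (ereduct \<Phi> R) | \<Phi>.
        cand_guess P \<Phi> \<and> \<not> (\<exists>\<Phi>'. \<Phi> \<subset> \<Phi>' \<and> cand_guess P \<Phi>')})"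

definition elp_union :: "'a elp \<Rightarrow> 'a elp \<Rightarrow> 'a elp" where
  "elp_union P Q = (case P of (A1, E1, R1) \<Rightarrow> case Q of (A2, E2, R2) \<Rightarrow>
     (A1 \<union> A2, E1 \<union> E2, R1 \<union> R2))"

definition erule_wf :: "'a set \<Rightarrow> 'a lit set \<Rightarrow> 'a erule \<Rightarrow> bool" where
  "erule_wf A E r \<longleftrightarrow> ehead r \<subseteq> A \<and> eposobj r \<subseteq> A \<and> enegobj r \<subseteq> A
     \<and> eknow r \<subseteq> E \<and> enknow r \<subseteq> E"

definition wf_elp :: "'a elp \<Rightarrow> bool" where
  "wf_elp P = (case P of (A, E, R) \<Rightarrow>
     finite A \<and> lit_atom ` E \<subseteq> A \<and> finite R \<and> (\<forall>r\<in>R. erule_wf A E r))"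

definition strongly_equivalent :: "'a elp \<Rightarrow> 'a elp \<Rightarrow> bool" where
  "strongly_equivalent P1 P2 \<longleftrightarrow>
     (\<forall>P. wf_elp P \<longrightarrow> world_views (elp_union P1 P) = world_views (elp_union P2 P))"

definition tautological :: "'a set \<Rightarrow> 'a lit set \<Rightarrow> 'a erule \<Rightarrow> bool" where
  "tautological A E r \<longleftrightarrow> strongly_equivalent (A, E, {r}) (A, E, {})"

end

theory Submission
  imports Defs
begin

(* Sufficiency: r^\<Phi> and its GL-reducts mention only atoms of A, so if every pair over A is an
   SE-model of r^\<Phi>, they are satisfied by every interpretation and adding r to a program changes
   none of its answer sets under \<Phi>.  A guess of a larger program that is compatible with some
   interpretations restricts to a consistent guess on E, so no world view changes.
   Necessity: a pair (X, Y) that is not an SE-model of r^\<Phi> yields Z (X or Y) with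
   B(r) \<subseteq> Z \<subseteq> Y, H(r) \<inter> Z = {} and Y satisfying the negative body of r^\<Phi>.  With three fresh atoms
   one builds a program with a single candidate guess under which c0 \<union> Y is an answer set
   without r exactly when it is not one with r, so adding r changes the world view. *)

lemma nbody_sat_lit_neg [simp]: "nbody_sat M (lit_neg l) \<longleftrightarrow> \<not> lit_sat M l"
  by (cases l) auto

lemma nbody_sat_lit_negneg [simp]: "nbody_sat M (lit_negneg l) \<longleftrightarrow> lit_sat M l"
  by (cases l) auto

lemma nbody_eq_lit_neg_iff [simp]:
  "NAtom a = lit_neg l \<longleftrightarrow> l = Pos a" "NNeg a = lit_neg l \<longleftrightarrow> l = Neg a"
  "NAtom a = lit_negneg l \<longleftrightarrow> l = Neg a" "NNeg a = lit_negneg l \<longleftrightarrow> l = Pos a"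
  by (cases l; auto)+

lemma lit_sat_insert: "lit_atom l \<noteq> c \<Longrightarrow> lit_sat (insert c M) l \<longleftrightarrow> lit_sat M l"
  by (cases l) auto

lemma prule_sat_PRule [simp]:
  "prule_sat M (PRule h p n) \<longleftrightarrow> (p \<subseteq> M \<and> (\<forall>x\<in>n. nbody_sat M x) \<longrightarrow> h \<inter> M \<noteq> {})"
  by (simp add: prule_sat_def)

lemma mods_insert: "mods U (insert p R) = mods U R \<inter> {M. prule_sat M p}"
  by (auto simp: mods_def)

lemma gl_reduct_insert:
  "gl_reduct M (insert p R) =
    (if \<forall>n\<in>pneg p. nbody_sat M n then insert (PRule (phead p) (ppos p) {}) (gl_reduct M R)
     else gl_reduct M R)"
  by (auto simp: gl_reduct_def)

lemma gl_reduct_singleton: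
  "gl_reduct Y {p} = (if \<forall>n\<in>pneg p. nbody_sat Y n then {PRule (phead p) (ppos p) {}} else {})"
  by (auto simp: gl_reduct_def)

lemma answer_sets_iff:
  "M \<in> answer_sets U R \<longleftrightarrow> M \<in> mods U R \<and> (\<forall>M'. M' \<subset> M \<longrightarrow> M' \<notin> mods U (gl_reduct M R))"
  by (auto simp: answer_sets_def)

lemma se_all_iff [simp]: "(X, Y) \<in> se_all A \<longleftrightarrow> X \<subseteq> Y \<and> Y \<subseteq> A"
  by (simp add: se_all_def)

lemma se_models_subset_se_all: "se_models A R \<subseteq> se_all A"
  by (auto simp: se_models_def mods_def)

lemma se_models_singleton_iff:
  "(X, Y) \<in> se_models A {p} \<longleftrightarrow> X \<subseteq> Y \<and> Y \<subseteq> A \<and> prule_sat Y p \<and>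
     ((\<forall>n\<in>pneg p. nbody_sat Y n) \<longrightarrow> prule_sat X (PRule (phead p) (ppos p) {}))"
  by (auto simp: se_models_def mods_def gl_reduct_singleton)

lemma not_se_model_singletonE:
  assumes "(X, Y) \<in> se_all A" "(X, Y) \<notin> se_models A {p}"
  obtains Z where "Z \<subseteq> Y" "\<forall>n\<in>pneg p. nbody_sat Y n" "ppos p \<subseteq> Z" "phead p \<inter> Z = {}"
    "phead p \<inter> Y = {} \<Longrightarrow> Z = Y"
proof (cases "prule_sat Y p")
  case True
  with assms have "\<forall>n\<in>pneg p. nbody_sat Y n" "ppos p \<subseteq> X" "phead p \<inter> X = {}"
    by (auto simp: se_models_singleton_iff)
  with True assms(1) show thesis
    by (intro that[of X]) (auto simp: prule_sat_def)
next
  case False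
  then show thesis
    by (intro that[of Y]) (auto simp: prule_sat_def)
qed

lemma answer_sets_insert_if_se_models_eq_se_all:
  assumes valid: "se_models A {p} = se_all A" and "A \<subseteq> U"
    and head: "phead p \<subseteq> A" and pos: "ppos p \<subseteq> A"
    and neg: "\<forall>a. NAtom a \<in> pneg p \<or> NNeg a \<in> pneg p \<longrightarrow> a \<in> A"
  shows "answer_sets U (insert p R) = answer_sets U R"
proof -
  have neg_local: "(\<forall>n\<in>pneg p. nbody_sat (M \<inter> A) n) \<longleftrightarrow> (\<forall>n\<in>pneg p. nbody_sat M n)" for M
  proof -
    have "nbody_sat (M \<inter> A) n = nbody_sat M n" if "n \<in> pneg p" for n
      using neg that by (cases n) auto
    then show ?thesis by auto
  qed
  \<comment> \<open>p mentions only atoms of A, so the SE-models (M \<inter> A, M \<inter> A) and (M' \<inter> A, M \<inter> A) suffice\<close>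
  have sat: "prule_sat M p" for M
  proof -
    have "(M \<inter> A, M \<inter> A) \<in> se_models A {p}" using valid by simp
    then show ?thesis using neg_local[of M] head pos
      by (auto simp: se_models_singleton_iff prule_sat_def)
  qed
  have reduct_sat: "prule_sat M' (PRule (phead p) (ppos p) {})"
    if "M' \<subseteq> M" "\<forall>n\<in>pneg p. nbody_sat M n" for M M'
  proof -
    have "(M' \<inter> A, M \<inter> A) \<in> se_models A {p}" using valid that(1) by auto
    then show ?thesis using that(2) neg_local[of M] head pos
      by (auto simp: se_models_singleton_iff)
  qed
  show ?thesis
  proof (rule set_eqI)
    fix M
    have "M' \<in> mods U (gl_reduct M (insert p R)) \<longleftrightarrow> M' \<in> mods U (gl_reduct M R)" if "M' \<subseteq> M" for M'
      using reduct_sat[OF that] by (auto simp: gl_reduct_insert mods_insert)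
    then show "M \<in> answer_sets U (insert p R) \<longleftrightarrow> M \<in> answer_sets U R"
      using sat by (auto simp: answer_sets_iff mods_insert)
  qed
qed

lemma ereduct_insert: "ereduct \<Phi> (insert r R) = insert (ereduct_rule \<Phi> r) (ereduct \<Phi> R)"
  by (simp add: ereduct_def)

lemma ereduct_rule_sel [simp]:
  "phead (ereduct_rule \<Phi> r) = ehead r" "ppos (ereduct_rule \<Phi> r) = eposobj r"
  by (simp_all add: ereduct_rule_def)

lemma ereduct_rule_objective [simp]: "ereduct_rule \<Psi> (ERule h p {} {} {}) = PRule h p {}"
  by (simp add: ereduct_rule_def)

lemma ereduct_rule_know_constraint [simp]:
  "ereduct_rule \<Psi> (ERule {} {} {} {l} {}) = PRule {} {} (if l \<in> \<Psi> then {} else {lit_neg l})"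
  by (auto simp: ereduct_rule_def)

lemma ereduct_rule_nknow_constraint [simp]:
  "ereduct_rule \<Psi> (ERule {} {} {} {} {l}) = PRule {} {} (if l \<in> \<Psi> then {NTop} else {lit_negneg l})"
  by (auto simp: ereduct_rule_def)

lemma mods_ereduct_iff:
  "M \<in> mods U (ereduct \<Psi> R) \<longleftrightarrow> M \<subseteq> U \<and> (\<forall>e\<in>R. prule_sat M (ereduct_rule \<Psi> e))"
  by (auto simp: mods_def ereduct_def)

lemma gl_reduct_ereduct:
  "gl_reduct M (ereduct \<Psi> R) =
    {PRule (ehead e) (eposobj e) {} | e. e \<in> R \<and> (\<forall>n\<in>pneg (ereduct_rule \<Psi> e). nbody_sat M n)}"
  by (auto simp: ereduct_def gl_reduct_def) (metis ereduct_rule_sel image_eqI)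

lemma mods_gl_reduct_ereduct_iff:
  "M' \<in> mods U (gl_reduct M (ereduct \<Psi> R)) \<longleftrightarrow> M' \<subseteq> U \<and>
    (\<forall>e\<in>R. (\<forall>n\<in>pneg (ereduct_rule \<Psi> e). nbody_sat M n) \<longrightarrow> prule_sat M' (PRule (ehead e) (eposobj e) {}))"
  by (auto simp: mods_def gl_reduct_ereduct)

lemma ereduct_rule_inter_guess:
  assumes "eknow r \<subseteq> E" "enknow r \<subseteq> E"
  shows "ereduct_rule (\<Psi> \<inter> E) r = ereduct_rule \<Psi> r"
proof -
  have "eknow r - \<Psi> \<inter> E = eknow r - \<Psi>" "enknow r - \<Psi> \<inter> E = enknow r - \<Psi>"
    "enknow r \<inter> (\<Psi> \<inter> E) = enknow r \<inter> \<Psi>"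
    using assms by blast+
  then show ?thesis by (simp add: ereduct_rule_def)
qed

lemma ereduct_rule_neg_body_satD:
  assumes neg: "\<forall>n\<in>pneg (ereduct_rule \<Phi> r). nbody_sat Y n"
  shows "\<forall>l\<in>enknow r. lit_sat Y l" "eknow r \<inter> enknow r = {}" "enegobj r \<inter> Y = {}"
proof -
  have "enknow r \<inter> \<Phi> = {}"
    using neg by (auto simp: ereduct_rule_def split: if_splits)
  then have "lit_negneg l \<in> pneg (ereduct_rule \<Phi> r)" if "l \<in> enknow r" for l
    using that by (auto simp: ereduct_rule_def)
  then show enknow: "\<forall>l\<in>enknow r. lit_sat Y l"
    using neg by fastforce
  have "lit_neg l \<in> pneg (ereduct_rule \<Phi> r)" if "l \<in> eknow r" "l \<notin> \<Phi>" for l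
    using that by (auto simp: ereduct_rule_def)
  then show "eknow r \<inter> enknow r = {}"
    using neg enknow \<open>enknow r \<inter> \<Phi> = {}\<close> by fastforce
  have "NAtom a \<in> pneg (ereduct_rule \<Phi> r)" if "a \<in> enegobj r" for a
    using that by (auto simp: ereduct_rule_def)
  then show "enegobj r \<inter> Y = {}"
    using neg by fastforce
qed

lemma wf_elp_lit_atom: "wf_elp (A, E, R) \<Longrightarrow> l \<in> E \<Longrightarrow> lit_atom l \<in> A"
  by (auto simp: wf_elp_def)

lemma wf_elp_finite_lits:
  assumes "wf_elp (A, E, R)"
  shows "finite E"
proof -
  have "l \<in> Pos ` A \<union> Neg ` A" if "l \<in> E" for l
    using wf_elp_lit_atom[OF assms that] by (cases l) auto
  then have "E \<subseteq> Pos ` A \<union> Neg ` A" by blast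
  then show ?thesis
    using assms by (auto simp: wf_elp_def intro: finite_subset)
qed

lemma wf_elp_single_rule:
  assumes "wf_elp (A, E, {r})"
  shows "ehead r \<subseteq> A" "eposobj r \<subseteq> A" "enegobj r \<subseteq> A" "eknow r \<subseteq> E" "enknow r \<subseteq> E"
  using assms by (auto simp: wf_elp_def erule_wf_def)

lemma ereduct_rule_neg_atoms:
  assumes "wf_elp (A, E, {r})" and "NAtom a \<in> pneg (ereduct_rule \<Psi> r) \<or> NNeg a \<in> pneg (ereduct_rule \<Psi> r)"
  shows "a \<in> A"
proof -
  have "a \<in> A" if "Pos a \<in> eknow r \<union> enknow r \<or> Neg a \<in> eknow r \<union> enknow r" for a
    using that wf_elp_single_rule[OF assms(1)] wf_elp_lit_atom[OF assms(1)] by force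
  then show ?thesis
    using assms(2) wf_elp_single_rule(3)[OF assms(1)]
    by (auto simp: ereduct_rule_def split: if_splits)
qed

lemma world_views_cong:
  assumes "\<And>\<Psi> \<I>. compatible E \<Psi> \<I> \<Longrightarrow>
    answer_sets U (ereduct \<Psi> R1) = answer_sets U (ereduct \<Psi> R2)"
  shows "world_views (U, E, R1) = world_views (U, E, R2)"
proof -
  have cand: "cand_guess (U, E, R1) = cand_guess (U, E, R2)"
    unfolding cand_guess_def prod.case by (metis assms)
  show ?thesis
    unfolding world_views_def prod.case cand
    by (auto simp: cand_guess_def dest: assms)
qed

lemma compatible_consistent_guess:
  assumes "compatible E' \<Psi> \<I>" "E \<subseteq> E'"
  shows "consistent_guess E (\<Psi> \<inter> E)"
  unfolding consistent_guess_def
proof (intro allI impI)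
  fix a assume a: "Pos a \<in> E \<and> Neg a \<in> E"
  obtain I where "I \<in> \<I>" using assms(1) by (auto simp: compatible_def)
  then have "\<not> (lit_sat I (Pos a) \<and> lit_sat I (Neg a))" by simp
  then show "Pos a \<in> \<Psi> \<inter> E \<or> Neg a \<in> \<Psi> \<inter> E"
    using assms \<open>I \<in> \<I>\<close> a unfolding compatible_def by blast
qed

lemma realizable_if_Pow_subset_mods:
  assumes atoms: "lit_atom ` E \<subseteq> A" and "\<Phi> \<subseteq> E" and cons: "consistent_guess E \<Phi>"
    and all_models: "Pow A \<subseteq> mods A (ereduct \<Phi> R)"
  shows "realizable (A, E, R) \<Phi>"
proof -
  \<comment> \<open>T falsifies the positive, A - F the negative literals of \<Phi>; by consistency both satisfy E - \<Phi>\<close>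
  define T where "T = {a. Pos a \<in> E - \<Phi>}"
  define F where "F = {a. Neg a \<in> E - \<Phi>}"
  have "T \<subseteq> A" using atoms by (force simp: T_def)
  then have "{T, A - F} \<subseteq> mods A (ereduct \<Phi> R)" using all_models by auto
  moreover have "compatible E \<Phi> {T, A - F}"
    unfolding compatible_def
  proof (intro conjI ballI)
    fix l assume "l \<in> \<Phi>"
    then show "\<exists>I\<in>{T, A - F}. \<not> lit_sat I l"
      using \<open>\<Phi> \<subseteq> E\<close> atoms by (cases l) (force simp: T_def F_def)+
  next
    fix l I assume "l \<in> E - \<Phi>" "I \<in> {T, A - F}"
    then show "lit_sat I l"
      using atoms cons by (cases l) (force simp: T_def F_def consistent_guess_def)+
  qed simp
  ultimately show ?thesis unfolding realizable_def prod.case by blast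
qed

lemma se_fun_single_rule_eq_se_all_iff:
  assumes wf: "wf_elp (A, E, {r})" and "\<Phi> \<subseteq> E" "consistent_guess E \<Phi>"
  shows "se_fun (A, E, {r}) \<Phi> = se_all A \<longleftrightarrow> se_models A {ereduct_rule \<Phi> r} = se_all A"
proof
  assume eq: "se_fun (A, E, {r}) \<Phi> = se_all A"
  have "se_all A \<noteq> {}" using se_all_iff[of "{}" "{}" A] by blast
  then have "realizable (A, E, {r}) \<Phi>" using eq by (auto simp: se_fun_def)
  with eq show "se_models A {ereduct_rule \<Phi> r} = se_all A"
    by (simp add: se_fun_def ereduct_def)
next
  assume valid: "se_models A {ereduct_rule \<Phi> r} = se_all A"
  have "Pow A \<subseteq> mods A (ereduct \<Phi> {r})"
  proof
    fix Y assume "Y \<in> Pow A"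
    then have "(Y, Y) \<in> se_models A (ereduct \<Phi> {r})" using valid by (simp add: ereduct_def)
    then show "Y \<in> mods A (ereduct \<Phi> {r})" by (simp add: se_models_def)
  qed
  then have "realizable (A, E, {r}) \<Phi>"
    using wf assms(2,3) by (intro realizable_if_Pow_subset_mods) (auto simp: wf_elp_def)
  then show "se_fun (A, E, {r}) \<Phi> = se_all A"
    using valid by (simp add: se_fun_def ereduct_def)
qed

lemma tautological_if_se_models_eq_se_all:
  assumes wf: "wf_elp (A, E, {r})"
    and valid: "\<forall>\<Phi>. \<Phi> \<subseteq> E \<and> consistent_guess E \<Phi> \<longrightarrow> se_models A {ereduct_rule \<Phi> r} = se_all A"
  shows "tautological A E r"
  unfolding tautological_def strongly_equivalent_def
proof (intro allI impI)
  fix P :: "'a elp"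
  obtain A' E' R' where P: "P = (A', E', R')" by (cases P)
  have "world_views (A \<union> A', E \<union> E', insert r R') = world_views (A \<union> A', E \<union> E', R')"
  proof (rule world_views_cong)
    fix \<Psi> \<I> assume "compatible (E \<union> E') \<Psi> \<I>"
    then have "se_models A {ereduct_rule (\<Psi> \<inter> E) r} = se_all A"
      using valid compatible_consistent_guess by blast
    then have "se_models A {ereduct_rule \<Psi> r} = se_all A"
      using ereduct_rule_inter_guess wf_elp_single_rule[OF wf] by metis
    then show "answer_sets (A \<union> A') (ereduct \<Psi> (insert r R')) = answer_sets (A \<union> A') (ereduct \<Psi> R')"
      unfolding ereduct_insert
      by (rule answer_sets_insert_if_se_models_eq_se_all)
        (use wf_elp_single_rule[OF wf] ereduct_rule_neg_atoms[OF wf] in auto)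
  qed
  then show "world_views (elp_union (A, E, {r}) P) = world_views (elp_union (A, E, {}) P)"
    using P by (simp add: elp_union_def)
qed

locale distinguishing_program =
  fixes A :: "'a set" and E :: "'a lit set" and r :: "'a erule"
    and Y Z :: "'a set" and c0 c1 c2 :: 'a
  assumes wf: "wf_elp (A, E, {r})"
    and Y_subset: "Y \<subseteq> A" and Z_subset: "Z \<subseteq> Y"
    and enknow_sat: "\<forall>l\<in>enknow r. lit_sat Y l"
    and eknow_enknow_disjoint: "eknow r \<inter> enknow r = {}"
    and enegobj_disjoint: "enegobj r \<inter> Y = {}"
    and eposobj_subset: "eposobj r \<subseteq> Z"
    and ehead_disjoint: "ehead r \<inter> Z = {}"
    and ehead_disjoint_imp: "ehead r \<inter> Y = {} \<Longrightarrow> Z = Y"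
    and fresh: "c0 \<notin> A" "c1 \<notin> A" "c2 \<notin> A" "c0 \<noteq> c1" "c0 \<noteq> c2" "c1 \<noteq> c2"
begin

definition guess :: "'a lit set" where "guess = E - enknow r"

definition true_atoms :: "'a set" where "true_atoms = {a. Pos a \<in> enknow r}"

definition false_atoms :: "'a set" where "false_atoms = {a. Neg a \<in> enknow r}"

definition atoms :: "'a set" where "atoms = insert c0 (insert c1 (insert c2 A))"

(* The program of the necessity proof, with K' = enknow r.  The fact c0 \<or> c1 \<or> c2 opens three
   branches: the c1- and c2-branches give the answer sets {c1} \<union> T and {c2} \<union> (A - F) that make
   E - K' compatible; the c0-branch derives Z and, from any atom of Y - Z, all of Y - Z.  The
   constraints ERule {} {} {} {l} {} (\<leftarrow> not l, l \<in> K') and ERule {} {} {} {} {l}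
   (\<leftarrow> \<not> not l, l \<in> E - K') leave E - K' as the only possible candidate guess. *)
definition prog :: "'a erule set" where
  "prog = insert (ERule {c0, c1, c2} {} {} {} {})
     ((\<lambda>z. ERule {z} {c0} {} {} {}) ` Z
      \<union> (\<lambda>(y, y'). ERule {y} {y', c0} {} {} {}) ` ((Y - Z) \<times> (Y - Z))
      \<union> (\<lambda>t. ERule {t} {c1} {} {} {}) ` true_atoms
      \<union> (\<lambda>x. ERule {x} {c2} {} {} {}) ` (A - false_atoms)
      \<union> (\<lambda>l. ERule {} {} {} {l} {}) ` enknow r
      \<union> (\<lambda>l. ERule {} {} {} {} {l}) ` guess)"

definition prog_closed :: "'a set \<Rightarrow> bool" where
  "prog_closed M \<longleftrightarrow> (c0 \<in> M \<or> c1 \<in> M \<or> c2 \<in> M)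
     \<and> (c0 \<in> M \<longrightarrow> Z \<subseteq> M \<and> (\<forall>y\<in>Y - Z. \<forall>y'\<in>Y - Z. y' \<in> M \<longrightarrow> y \<in> M))
     \<and> (c1 \<in> M \<longrightarrow> true_atoms \<subseteq> M) \<and> (c2 \<in> M \<longrightarrow> A - false_atoms \<subseteq> M)"

lemma ball_prog:
  "(\<forall>e\<in>prog. P e) \<longleftrightarrow> P (ERule {c0, c1, c2} {} {} {} {})
     \<and> (\<forall>z\<in>Z. P (ERule {z} {c0} {} {} {}))
     \<and> (\<forall>y\<in>Y - Z. \<forall>y'\<in>Y - Z. P (ERule {y} {y', c0} {} {} {}))
     \<and> (\<forall>t\<in>true_atoms. P (ERule {t} {c1} {} {} {}))
     \<and> (\<forall>x\<in>A - false_atoms. P (ERule {x} {c2} {} {} {}))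
     \<and> (\<forall>l\<in>enknow r. P (ERule {} {} {} {l} {}))
     \<and> (\<forall>l\<in>guess. P (ERule {} {} {} {} {l}))"
  unfolding prog_def by (simp add: ball_Un)

lemma mods_prog_iff:
  "M \<in> mods atoms (ereduct guess prog) \<longleftrightarrow>
    M \<subseteq> atoms \<and> prog_closed M \<and> (\<forall>l\<in>enknow r. lit_sat M l)"
  unfolding mods_ereduct_iff ball_prog prog_closed_def by (auto simp: guess_def)

lemma mods_gl_reduct_prog_iff:
  "M' \<in> mods atoms (gl_reduct M (ereduct guess prog)) \<longleftrightarrow>
    M' \<subseteq> atoms \<and> prog_closed M' \<and> (\<forall>l\<in>enknow r. lit_sat M l)"
  unfolding mods_gl_reduct_ereduct_iff ball_prog prog_closed_def by (auto simp: guess_def)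

abbreviation base_answer_sets :: "'a set set" where
  "base_answer_sets \<equiv> answer_sets atoms (ereduct guess prog)"

abbreviation ext_answer_sets :: "'a set set" where
  "ext_answer_sets \<equiv> answer_sets atoms (ereduct guess (insert r prog))"

lemma answer_sets_prog_iff:
  "M \<in> base_answer_sets \<longleftrightarrow> M \<subseteq> atoms \<and> (\<forall>l\<in>enknow r. lit_sat M l) \<and>
    prog_closed M \<and> (\<forall>M'. M' \<subset> M \<longrightarrow> \<not> prog_closed M')"
  unfolding answer_sets_iff mods_prog_iff mods_gl_reduct_prog_iff by blast

lemma enknow_atoms: "l \<in> enknow r \<Longrightarrow> lit_atom l \<in> A"
  using wf_elp_single_rule(5)[OF wf] wf_elp_lit_atom[OF wf] by blast

lemma enknow_sat_insert_fresh:
  assumes "c \<notin> A" "\<forall>l\<in>enknow r. lit_sat M l"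
  shows "\<forall>l\<in>enknow r. lit_sat (insert c M) l"
  using assms enknow_atoms lit_sat_insert by metis

lemma true_atoms_subset: "true_atoms \<subseteq> A"
  using enknow_atoms by (force simp: true_atoms_def)

lemma true_false_atoms_disjoint: "true_atoms \<inter> false_atoms = {}"
proof -
  have "a \<in> Y" "a \<notin> Y" if "Pos a \<in> enknow r" "Neg a \<in> enknow r" for a
    using that enknow_sat by force+
  then show ?thesis by (auto simp: true_atoms_def false_atoms_def)
qed

lemma true_answer_set: "insert c1 true_atoms \<in> base_answer_sets"
proof -
  have "lit_sat true_atoms l" if "l \<in> enknow r" for l
    using that true_false_atoms_disjoint by (cases l) (auto simp: true_atoms_def false_atoms_def)
  moreover have "\<not> prog_closed M'" if "M' \<subset> insert c1 true_atoms" for M'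
    using that fresh true_atoms_subset by (auto simp: prog_closed_def)
  ultimately show ?thesis
    unfolding answer_sets_prog_iff using fresh true_atoms_subset enknow_sat_insert_fresh
    by (auto simp: prog_closed_def atoms_def)
qed

lemma false_answer_set: "insert c2 (A - false_atoms) \<in> base_answer_sets"
proof -
  have "lit_sat (A - false_atoms) l" if "l \<in> enknow r" for l
    using that true_false_atoms_disjoint enknow_atoms
    by (cases l) (force simp: true_atoms_def false_atoms_def)+
  moreover have "\<not> prog_closed M'" if "M' \<subset> insert c2 (A - false_atoms)" for M'
    using that fresh by (auto simp: prog_closed_def)
  ultimately show ?thesis
    unfolding answer_sets_prog_iff using fresh enknow_sat_insert_fresh
    by (auto simp: prog_closed_def atoms_def)
qed

lemma compatible_guess: "compatible E guess base_answer_sets"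
  unfolding compatible_def
proof (intro conjI ballI)
  show "base_answer_sets \<noteq> {}" using true_answer_set by blast
next
  fix l assume l: "l \<in> guess"
  then have "lit_atom l \<in> A" "l \<notin> enknow r"
    using wf_elp_lit_atom[OF wf] by (auto simp: guess_def)
  then have "\<not> lit_sat (insert c1 true_atoms) l \<or> \<not> lit_sat (insert c2 (A - false_atoms)) l"
    using fresh by (cases l) (auto simp: true_atoms_def false_atoms_def)
  then show "\<exists>I\<in>base_answer_sets. \<not> lit_sat I l"
    using true_answer_set false_answer_set by blast
next
  fix l I assume "l \<in> E - guess" "I \<in> base_answer_sets"
  then show "lit_sat I l" unfolding answer_sets_prog_iff by (auto simp: guess_def)
qed

lemma candidate_guess_unique:
  assumes "\<Psi> \<subseteq> E" and comp: "compatible E \<Psi> (answer_sets atoms (ereduct \<Psi> R))"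
    and "prog \<subseteq> R"
  shows "\<Psi> = guess"
proof (rule ccontr)
  assume "\<Psi> \<noteq> guess"
  from comp obtain M where M: "M \<in> answer_sets atoms (ereduct \<Psi> R)"
    unfolding compatible_def by blast
  then have sat: "prule_sat M (ereduct_rule \<Psi> e)" if "e \<in> R" for e
    using that by (auto simp: answer_sets_iff mods_ereduct_iff)
  show False
  proof (cases "\<Psi> \<subseteq> guess")
    case False
    then obtain l where "l \<in> \<Psi>" "l \<in> enknow r"
      using \<open>\<Psi> \<subseteq> E\<close> by (auto simp: guess_def)
    moreover from \<open>l \<in> enknow r\<close> have "ERule {} {} {} {l} {} \<in> R"
      using \<open>prog \<subseteq> R\<close> by (auto simp: prog_def)
    ultimately show False using sat by fastforce
  next
    case True
    then obtain l where l: "l \<in> guess" "l \<notin> \<Psi>" using \<open>\<Psi> \<noteq> guess\<close> by blast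
    then have "ERule {} {} {} {} {l} \<in> R"
      using \<open>prog \<subseteq> R\<close> by (auto simp: prog_def)
    then have "\<not> lit_sat M l" using sat l by fastforce
    moreover have "l \<in> E - \<Psi>" using l by (auto simp: guess_def)
    ultimately show False using comp M unfolding compatible_def by blast
  qed
qed

lemma ereduct_rule_guess:
  "ereduct_rule guess r = PRule (ehead r) (eposobj r) (NAtom ` enegobj r \<union> lit_negneg ` enknow r)"
proof -
  have guess: "eknow r - guess = {}" "enknow r - guess = enknow r" "enknow r \<inter> guess = {}"
    using wf_elp_single_rule[OF wf] eknow_enknow_disjoint by (auto simp: guess_def)
  show ?thesis unfolding ereduct_rule_def guess by simp
qed

lemma fresh_notin_Y: "c0 \<notin> Y" "c1 \<notin> Y" "c2 \<notin> Y"
  using fresh Y_subset by auto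

lemma Y_models_prog: "insert c0 Y \<in> mods atoms (ereduct guess prog)"
  unfolding mods_prog_iff using Y_subset Z_subset fresh enknow_sat enknow_sat_insert_fresh
  by (auto simp: prog_closed_def atoms_def)

lemma Y_base_answer_set_iff: "insert c0 Y \<in> base_answer_sets \<longleftrightarrow> Z = Y"
proof
  assume Y: "insert c0 Y \<in> base_answer_sets"
  show "Z = Y"
  proof (rule ccontr)
    assume "Z \<noteq> Y"
    then have "insert c0 Z \<subset> insert c0 Y" using Z_subset fresh_notin_Y by auto
    moreover have "prog_closed (insert c0 Z)"
      using Z_subset fresh fresh_notin_Y by (auto simp: prog_closed_def)
    ultimately show False using Y by (auto simp: answer_sets_prog_iff)
  qed
next
  assume "Z = Y"
  then have "\<not> prog_closed M'" if "M' \<subset> insert c0 Y" for M'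
    using that fresh fresh_notin_Y unfolding prog_closed_def by auto
  then show "insert c0 Y \<in> base_answer_sets"
    using Y_models_prog unfolding answer_sets_prog_iff mods_prog_iff by blast
qed

lemma Y_neg_body_sat: "\<forall>n\<in>pneg (ereduct_rule guess r). nbody_sat (insert c0 Y) n"
  using enegobj_disjoint wf_elp_single_rule(3)[OF wf] fresh enknow_sat enknow_sat_insert_fresh
  by (auto simp: ereduct_rule_guess)

lemma Y_ext_answer_set_iff: "insert c0 Y \<in> ext_answer_sets \<longleftrightarrow> ehead r \<inter> Y \<noteq> {}"
proof -
  have head: "ehead r \<inter> insert c0 Y = ehead r \<inter> Y"
    using wf_elp_single_rule(1)[OF wf] fresh by auto
  have minimal: "\<not> (prog_closed M' \<and> prule_sat M' (PRule (ehead r) (eposobj r) {}))"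
    if "M' \<subset> insert c0 Y" for M'
  proof
    assume M': "prog_closed M' \<and> prule_sat M' (PRule (ehead r) (eposobj r) {})"
    then have "c0 \<in> M'" "Z \<subseteq> M'" and loop: "\<forall>y\<in>Y - Z. \<forall>y'\<in>Y - Z. y' \<in> M' \<longrightarrow> y \<in> M'"
      using that fresh fresh_notin_Y by (auto simp: prog_closed_def)
    show False
    proof (cases "M' \<inter> (Y - Z) = {}")
      case True
      then have "M' \<subseteq> insert c0 Z" using that by blast
      then show False using M' \<open>Z \<subseteq> M'\<close> eposobj_subset ehead_disjoint fresh
          wf_elp_single_rule(1)[OF wf] by auto
    next
      case False
      then have "Y - Z \<subseteq> M'" using loop by blast
      then show False using that \<open>c0 \<in> M'\<close> \<open>Z \<subseteq> M'\<close> by auto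
    qed
  qed
  have reduct_models: "M' \<in> mods atoms (gl_reduct (insert c0 Y) (ereduct guess prog)) \<longleftrightarrow> prog_closed M'"
    if "M' \<subset> insert c0 Y" for M'
    using that Y_models_prog enknow_sat_insert_fresh[OF fresh(1) enknow_sat]
    unfolding mods_gl_reduct_prog_iff mods_prog_iff by blast
  have "insert c0 Y \<in> ext_answer_sets \<longleftrightarrow> prule_sat (insert c0 Y) (ereduct_rule guess r) \<and>
      (\<forall>M'. M' \<subset> insert c0 Y \<longrightarrow>
        \<not> (M' \<in> mods atoms (gl_reduct (insert c0 Y) (ereduct guess prog)) \<and>
           prule_sat M' (PRule (ehead r) (eposobj r) {})))"
    using Y_models_prog Y_neg_body_sat
    unfolding ereduct_insert answer_sets_iff gl_reduct_insert ereduct_rule_sel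
    by (simp add: mods_insert)
  also have "\<dots> \<longleftrightarrow> prule_sat (insert c0 Y) (ereduct_rule guess r)"
    using minimal reduct_models by blast
  also have "\<dots> \<longleftrightarrow> ehead r \<inter> Y \<noteq> {}"
    using Y_neg_body_sat head Z_subset eposobj_subset by (auto simp: ereduct_rule_guess)
  finally show ?thesis .
qed

lemma base_answer_sets_neq_ext: "base_answer_sets \<noteq> ext_answer_sets"
proof -
  have "Z = Y \<longleftrightarrow> ehead r \<inter> Y = {}" using ehead_disjoint ehead_disjoint_imp by auto
  then show ?thesis using Y_base_answer_set_iff Y_ext_answer_set_iff by auto
qed

lemma wf_prog: "wf_elp (atoms, E, prog)"
proof -
  have "finite A" "finite E" using wf wf_elp_finite_lits by (auto simp: wf_elp_def)
  then have "finite Z" "finite Y" "finite true_atoms" "finite (enknow r)" "finite guess"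
    using Y_subset Z_subset true_atoms_subset wf_elp_single_rule(5)[OF wf]
    by (auto simp: guess_def intro: finite_subset)
  then have "finite prog" using \<open>finite A\<close> by (simp add: prog_def)
  moreover have "erule_wf atoms E e" if "e \<in> prog" for e
    using that Y_subset Z_subset true_atoms_subset wf_elp_single_rule(5)[OF wf]
    by (auto simp: prog_def erule_wf_def atoms_def guess_def)
  ultimately show ?thesis
    using wf \<open>finite A\<close> by (auto simp: wf_elp_def atoms_def)
qed

lemma not_tautological: "\<not> tautological A E r"
proof
  assume "tautological A E r"
  then have "world_views (elp_union (A, E, {r}) (atoms, E, prog)) =
      world_views (elp_union (A, E, {}) (atoms, E, prog))"
    using wf_prog unfolding tautological_def strongly_equivalent_def by blast
  moreover have "elp_union (A, E, {r}) (atoms, E, prog) = (atoms, E, insert r prog)"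
    "elp_union (A, E, {}) (atoms, E, prog) = (atoms, E, prog)"
    by (auto simp: elp_union_def atoms_def)
  ultimately have same: "world_views (atoms, E, insert r prog) = world_views (atoms, E, prog)"
    by simp
  have unique: "\<Psi> = guess" if "cand_guess (atoms, E, R) \<Psi>" "prog \<subseteq> R" for \<Psi> R
    using that candidate_guess_unique by (auto simp: cand_guess_def)
  have "base_answer_sets \<in> world_views (atoms, E, prog)"
    using compatible_guess unique[where R = prog]
    by (auto simp: world_views_def cand_guess_def guess_def)
  moreover have "base_answer_sets \<notin> world_views (atoms, E, insert r prog)"
    using unique[where R = "insert r prog"] base_answer_sets_neq_ext by (auto simp: world_views_def)
  ultimately show False using same by simp
qed

end

lemma se_models_eq_se_all_if_tautological:
  fixes A :: "'a set" and E :: "'a lit set" and r :: "'a erule"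
  assumes "infinite (UNIV :: 'a set)" and wf: "wf_elp (A, E, {r})" and "tautological A E r"
  shows "se_models A {ereduct_rule \<Phi> r} = se_all A"
proof (rule ccontr)
  assume "se_models A {ereduct_rule \<Phi> r} \<noteq> se_all A"
  then obtain X Y where XY: "(X, Y) \<in> se_all A" "(X, Y) \<notin> se_models A {ereduct_rule \<Phi> r}"
    using se_models_subset_se_all[of A "{ereduct_rule \<Phi> r}"] by fastforce
  then have "Y \<subseteq> A" by simp
  from XY obtain Z where "Z \<subseteq> Y" and neg: "\<forall>n\<in>pneg (ereduct_rule \<Phi> r). nbody_sat Y n"
    and "eposobj r \<subseteq> Z" "ehead r \<inter> Z = {}" "ehead r \<inter> Y = {} \<Longrightarrow> Z = Y"
    by (elim not_se_model_singletonE) auto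
  have "finite A" using wf by (simp add: wf_elp_def)
  obtain c0 where "c0 \<notin> A"
    using ex_new_if_finite[OF assms(1) \<open>finite A\<close>] by blast
  obtain c1 where "c1 \<notin> insert c0 A"
    using ex_new_if_finite[OF assms(1)] \<open>finite A\<close> by (meson finite_insert)
  obtain c2 where "c2 \<notin> insert c1 (insert c0 A)"
    using ex_new_if_finite[OF assms(1)] \<open>finite A\<close> by (meson finite_insert)
  note fresh = \<open>c0 \<notin> A\<close> \<open>c1 \<notin> insert c0 A\<close> this
  interpret distinguishing_program A E r Y Z c0 c1 c2
    using fresh wf ereduct_rule_neg_body_satD[OF neg] \<open>Z \<subseteq> Y\<close> \<open>Y \<subseteq> A\<close> \<open>eposobj r \<subseteq> Z\<close>
      \<open>ehead r \<inter> Z = {}\<close> \<open>ehead r \<inter> Y = {} \<Longrightarrow> Z = Y\<close>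
    by unfold_locales auto
  show False using not_tautological \<open>tautological A E r\<close> by blast
qed

theorem lemma4:
  fixes A :: "'a set" and E :: "'a lit set" and r :: "'a erule"
  assumes "infinite (UNIV :: 'a set)"
    and "wf_elp (A, E, {r})"
  shows "tautological A E r \<longleftrightarrow>
           (\<forall>\<Phi>. \<Phi> \<subseteq> E \<and> consistent_guess E \<Phi> \<longrightarrow> se_fun (A, E, {r}) \<Phi> = se_all A)"
  using se_models_eq_se_all_if_tautological[OF assms] tautological_if_se_models_eq_se_all[OF assms(2)]
    se_fun_single_rule_eq_se_all_iff[OF assms(2)]
  by metis

end
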